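(* Let $\gamma>0$, $\Delta\in[0,1)$, $\zeta\in(0,1]$ and suppose $\gamma<\frac{1+\Delta}{\zeta\sigma_{\max}^2}$ and $\frac{(1-\zeta)\gamma}{1-\Delta}\cdot\frac1n\operatorname{tr}(\boldsymbol A\boldsymbol A^T)<1$. Then $\|\mathcal K\|:=\sum_{t=0}^\infty\mathcal K(t)<1$.
   Context: $\boldsymbol A\in\mathbb R^{n\times d}$, $\sigma_1^2\ge\dots\ge\sigma_n^2\ge0$ the eigenvalues of $\boldsymbol A\boldsymbol A^T$, $\sigma_{\max}^2$ the largest. For $j\in[n]$: $\Omega_j=1-\gamma\zeta\sigma_j^2+\Delta$, $\lambda_{2,j},\lambda_{3,j}=\frac{-2\Delta+\Omega_j^2\pm\sqrt{\Omega_j^2(\Omega_j^2-4\Delta)}}{2}$ (complex square root if the argument is negative). The kernel is $\mathcal K(t)=\gamma^2\zeta(1-\zeta)H_2(t)$ with $H_2(t)=\frac1n\sum_{j=1}^n\frac{2\sigma_j^4}{\Omega_j^2-4\Delta}\big(-\Delta^{t+1}+\frac12\lambda_{2,j}^{t+1}+\frac12\lambda_{3,j}^{t+1}\big)$ (terms with $\Omega_j^2=4\Delta$ understood by continuity). *)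

theory Defs
  imports Complex_Main "Jordan_Normal_Form.Char_Poly"
begin

definition mat_trace :: "'a::comm_ring_1 mat \<Rightarrow> 'a" where
  "mat_trace M = (\<Sum>i<dim_row M. M $$ (i,i))"

definition Omega :: "real \<Rightarrow> real \<Rightarrow> real \<Rightarrow> real \<Rightarrow> real" where
  "Omega \<gamma> \<zeta> \<Delta> s = 1 - \<gamma> * \<zeta> * s + \<Delta>"

definition lam2 :: "real \<Rightarrow> real \<Rightarrow> real \<Rightarrow> real \<Rightarrow> complex" where
  "lam2 \<gamma> \<zeta> \<Delta> s = (let w = Omega \<gamma> \<zeta> \<Delta> s in
     (complex_of_real (- 2 * \<Delta> + w^2) + csqrt (complex_of_real (w^2 * (w^2 - 4 * \<Delta>)))) / 2)"

definition lam3 :: "real \<Rightarrow> real \<Rightarrow> real \<Rightarrow> real \<Rightarrow> complex" where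
  "lam3 \<gamma> \<zeta> \<Delta> s = (let w = Omega \<gamma> \<zeta> \<Delta> s in
     (complex_of_real (- 2 * \<Delta> + w^2) - csqrt (complex_of_real (w^2 * (w^2 - 4 * \<Delta>)))) / 2)"

text \<open>The j-th summand of H_2(t) (before the factor 1/n), with s = sigma_j^2.
  When Omega_j^2 = 4 Delta the summand is defined by its continuous extension,
  which equals sigma_j^4 (t+1)^2 Delta^t.\<close>
definition H2_term :: "real \<Rightarrow> real \<Rightarrow> real \<Rightarrow> real \<Rightarrow> nat \<Rightarrow> complex" where
  "H2_term \<gamma> \<zeta> \<Delta> s t = (let w = Omega \<gamma> \<zeta> \<Delta> s in
     if w^2 = 4 * \<Delta> then complex_of_real (s^2 * (real t + 1)^2 * \<Delta>^t)
     else complex_of_real (2 * s^2 / (w^2 - 4 * \<Delta>)) *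
       (- complex_of_real (\<Delta>^(t+1)) + lam2 \<gamma> \<zeta> \<Delta> s ^ (t+1) / 2
        + lam3 \<gamma> \<zeta> \<Delta> s ^ (t+1) / 2))"

text \<open>H_2(t); s j = sigma_{j+1}^2 for j < n (0-based indexing).\<close>
definition H2 :: "nat \<Rightarrow> (nat \<Rightarrow> real) \<Rightarrow> real \<Rightarrow> real \<Rightarrow> real \<Rightarrow> nat \<Rightarrow> complex" where
  "H2 n s \<gamma> \<zeta> \<Delta> t = (1 / of_nat n) * (\<Sum>j<n. H2_term \<gamma> \<zeta> \<Delta> (s j) t)"

definition kernel :: "nat \<Rightarrow> (nat \<Rightarrow> real) \<Rightarrow> real \<Rightarrow> real \<Rightarrow> real \<Rightarrow> nat \<Rightarrow> complex" where
  "kernel n s \<gamma> \<zeta> \<Delta> t = complex_of_real (\<gamma>^2 * \<zeta> * (1 - \<zeta>)) * H2 n s \<gamma> \<zeta> \<Delta> t"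

end

theory Submission
  imports Defs "Jordan_Normal_Form.Schur_Decomposition"
begin

(* For each eigenvalue s = sigma_j^2 of A A^T, the summand of H_2 is a combination of the
   geometric sequences Delta^(t+1), lambda_2^(t+1), lambda_3^(t+1), where lambda_2, lambda_3
   are the roots of x^2 - (Omega^2 - 2 Delta) x + Delta^2.  The step-size condition puts
   Omega in (0, 1 + Delta), which by the Schur-Cohn criterion puts both roots inside the unit
   disc, so the series converges to s^2 (1 + Delta) / ((1 - Delta) ((1 + Delta)^2 - Omega^2)).
   Since (1 + Delta)^2 - Omega^2 = gamma zeta s (1 + Delta + Omega) >= gamma zeta s (1 + Delta),
   the contribution of sigma_j to the norm of the kernel is at most (1 - zeta) gamma s / (1 - Delta);
   averaging over j and using tr(A A^T) = sum_j sigma_j^2 bounds the norm by the left-hand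
   side of the trace hypothesis. *)

hide_const (open) Coset.kernel

lemma mat_trace_mult_comm:
  fixes X Y :: "'a::comm_ring_1 mat"
  assumes X: "X \<in> carrier_mat n m" and Y: "Y \<in> carrier_mat m n"
  shows "mat_trace (X * Y) = mat_trace (Y * X)"
proof -
  have "mat_trace (X * Y) = (\<Sum>i<n. \<Sum>k<m. X $$ (i,k) * Y $$ (k,i))"
    using X Y by (simp add: mat_trace_def scalar_prod_def lessThan_atLeast0)
  also have "\<dots> = (\<Sum>k<m. \<Sum>i<n. Y $$ (k,i) * X $$ (i,k))"
    by (subst sum.swap) (simp add: mult.commute)
  also have "\<dots> = mat_trace (Y * X)"
    using X Y by (simp add: mat_trace_def scalar_prod_def lessThan_atLeast0)
  finally show ?thesis .
qed

lemma mat_trace_similar: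
  fixes A B :: "'a::comm_ring_1 mat"
  assumes "similar_mat A B"
  shows "mat_trace A = mat_trace B"
proof -
  obtain n P Q where carrier: "{A, B, P, Q} \<subseteq> carrier_mat n n"
    and QP: "Q * P = 1\<^sub>m n" and A: "A = P * B * Q"
    using similar_matD[OF assms] by blast
  then have P: "P \<in> carrier_mat n n" and B: "B \<in> carrier_mat n n" and Q: "Q \<in> carrier_mat n n"
    by auto
  have "mat_trace A = mat_trace (P * (B * Q))"
    unfolding A using P B Q by (simp add: assoc_mult_mat)
  also have "\<dots> = mat_trace (B * Q * P)"
    using P B Q by (intro mat_trace_mult_comm) auto
  also have "B * Q * P = B"
    using B Q P QP by (simp add: assoc_mult_mat)
  finally show ?thesis .
qed

lemma mat_trace_eq_sum_eigenvalues:
  fixes M :: "'a::conjugatable_ordered_field mat"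
  assumes M: "M \<in> carrier_mat n n" and char_poly: "char_poly M = (\<Prod>a\<leftarrow>es. [:- a, 1:])"
  shows "mat_trace M = sum_list es"
proof -
  obtain B P Q where "schur_decomposition M es = (B, P, Q)"
    by (cases "schur_decomposition M es") auto
  from schur_decomposition[OF M char_poly this]
  have wit: "similar_mat_wit M B P Q" and diag: "diag_mat B = es"
    by auto
  have "mat_trace M = mat_trace B"
    using wit by (intro mat_trace_similar) (auto simp: similar_mat_def)
  also have "\<dots> = sum_list (diag_mat B)"
    using similar_mat_witD2(5)[OF M wit]
    by (simp add: mat_trace_def diag_mat_def sum_list_sum_nth lessThan_atLeast0)
  finally show ?thesis
    unfolding diag .
qed

lemma of_nat_times_power_sums:
  fixes z :: "'a::{real_normed_field,banach}"
  assumes "norm z < 1"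
  shows "(\<lambda>n. of_nat n * z ^ n) sums (z / (1 - z)^2)"
proof -
  have "(\<lambda>n. z * (of_nat (Suc n) * z ^ n)) sums (z * (1 / (1 - z)^2))"
    by (rule sums_mult[OF geometric_deriv_sums[OF assms]])
  then have "(\<lambda>n. of_nat (Suc n) * z ^ Suc n) sums (z / (1 - z)^2)"
    by (simp add: algebra_simps)
  then show ?thesis
    using sums_Suc_iff[of "\<lambda>n. of_nat n * z ^ n"] by simp
qed

lemma Suc_squared_times_power_sums:
  fixes z :: "'a::{real_normed_field,banach}"
  assumes z: "norm z < 1"
  shows "(\<lambda>n. of_nat (Suc n)^2 * z ^ n) sums ((1 + z) / (1 - z)^3)"
proof -
  have "1 - z \<noteq> 0"
    using z by auto
  moreover have "(1 - z)^2 - z * (2 * z - 2) = (1 + z) * (1 - z)"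
    by (simp add: power2_eq_square algebra_simps)
  moreover have "(1 - z) ^ 4 = (1 - z)^3 * (1 - z)"
    by (simp add: power_numeral_reduce)
  ultimately have "((\<lambda>z. z / (1 - z)^2) has_field_derivative ((1 + z) / (1 - z)^3)) (at z)"
    by (auto intro!: derivative_eq_intros)
  from termdiffs_sums_strong[OF of_nat_times_power_sums this, of 1]
  have "(\<lambda>n. diffs of_nat n * z ^ n) sums ((1 + z) / (1 - z)^3)"
    using z by auto
  then show ?thesis
    by (simp add: diffs_def power2_eq_square)
qed

lemma power_Suc_add_power_Suc_sums:
  fixes a b :: "'a::{real_normed_field,banach}"
  assumes a: "norm a < 1" and b: "norm b < 1"
  shows "(\<lambda>t. a ^ Suc t + b ^ Suc t) sums ((a + b - 2 * (a * b)) / (1 - (a + b) + a * b))"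
proof -
  have "(\<lambda>t. a * a ^ t + b * b ^ t) sums (a * (1 / (1 - a)) + b * (1 / (1 - b)))"
    by (intro sums_add sums_mult geometric_sums a b)
  moreover have "1 - a \<noteq> 0" "1 - b \<noteq> 0"
    using a b by auto
  then have "a * (1 / (1 - a)) + b * (1 / (1 - b)) = (a + b - 2 * (a * b)) / (1 - (a + b) + a * b)"
    by (simp add: field_simps)
  ultimately show ?thesis
    by simp
qed

lemma norm_quadratic_roots_less_one:
  fixes p q :: real
  assumes p: "\<bar>p\<bar> < 1 + q" and q: "q < 1"
  defines "r \<equiv> csqrt (of_real (p^2 - 4 * q))"
  shows "norm ((of_real p + r) / 2) < 1" and "norm ((of_real p - r) / 2) < 1"
proof -
  define D where "D = p^2 - 4 * q"
  have "norm ((of_real p + r) / 2) < 1 \<and> norm ((of_real p - r) / 2) < 1"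
  proof (cases "D \<ge> 0")
    case True
    then have r: "r = of_real (sqrt D)"
      unfolding r_def D_def by (simp add: csqrt_of_real)
    have "D < (2 - \<bar>p\<bar>)^2"
      using p by (simp add: D_def power2_eq_square algebra_simps abs_mult_self_eq)
    then have "sqrt D < 2 - \<bar>p\<bar>"
      using p q by (simp add: real_less_lsqrt)
    moreover have "0 \<le> sqrt D"
      using True by simp
    ultimately have "\<bar>p + sqrt D\<bar> < 2 \<and> \<bar>p - sqrt D\<bar> < 2"
      by linarith
    then show ?thesis
      unfolding r by (simp add: norm_divide flip: of_real_add of_real_diff)
  next
    case False
    then have r: "r = \<i> * of_real (sqrt (- D))"
      unfolding r_def D_def by (simp add: csqrt_of_real')
    have root_norm: "norm ((of_real p + \<i> * of_real b) / 2) < 1" if "b^2 = - D" for b :: real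
    proof -
      have "norm ((of_real p + \<i> * of_real b) / 2) ^ 2 = q"
        using that by (simp add: cmod_power2 power_divide D_def)
      then show ?thesis
        using q by (metis abs_square_less_1 abs_norm_cancel)
    qed
    have "norm ((of_real p + r) / 2) < 1"
      unfolding r by (rule root_norm) (use False in simp)
    moreover have "norm ((of_real p - r) / 2) < 1"
      using root_norm[of "- sqrt (- D)"] False unfolding r by simp
    ultimately show ?thesis ..
  qed
  then show "norm ((of_real p + r) / 2) < 1" and "norm ((of_real p - r) / 2) < 1"
    by auto
qed

lemma lam2_lam3_eq_quadratic_roots:
  fixes \<gamma> \<zeta> \<Delta> s :: real
  defines "p \<equiv> (Omega \<gamma> \<zeta> \<Delta> s)^2 - 2 * \<Delta>"
  shows "lam2 \<gamma> \<zeta> \<Delta> s = (of_real p + csqrt (of_real (p^2 - 4 * \<Delta>^2))) / 2"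
    and "lam3 \<gamma> \<zeta> \<Delta> s = (of_real p - csqrt (of_real (p^2 - 4 * \<Delta>^2))) / 2"
proof -
  have "(Omega \<gamma> \<zeta> \<Delta> s)^2 * ((Omega \<gamma> \<zeta> \<Delta> s)^2 - 4 * \<Delta>) = p^2 - 4 * \<Delta>^2"
    unfolding p_def by (simp add: power2_eq_square algebra_simps)
  then show "lam2 \<gamma> \<zeta> \<Delta> s = (of_real p + csqrt (of_real (p^2 - 4 * \<Delta>^2))) / 2"
    and "lam3 \<gamma> \<zeta> \<Delta> s = (of_real p - csqrt (of_real (p^2 - 4 * \<Delta>^2))) / 2"
    unfolding lam2_def lam3_def Let_def p_def by simp_all
qed

lemma lam2_add_lam3: "lam2 \<gamma> \<zeta> \<Delta> s + lam3 \<gamma> \<zeta> \<Delta> s = of_real ((Omega \<gamma> \<zeta> \<Delta> s)^2 - 2 * \<Delta>)"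
  unfolding lam2_lam3_eq_quadratic_roots by (simp add: field_simps)

lemma lam2_mult_lam3: "lam2 \<gamma> \<zeta> \<Delta> s * lam3 \<gamma> \<zeta> \<Delta> s = of_real (\<Delta>^2)"
proof -
  define p where "p = (Omega \<gamma> \<zeta> \<Delta> s)^2 - 2 * \<Delta>"
  define r where "r = csqrt (of_real (p^2 - 4 * \<Delta>^2))"
  have "lam2 \<gamma> \<zeta> \<Delta> s * lam3 \<gamma> \<zeta> \<Delta> s = (of_real p ^ 2 - r ^ 2) / 4"
    unfolding lam2_lam3_eq_quadratic_roots p_def[symmetric] r_def[symmetric]
    by (simp add: field_simps power2_eq_square)
  also have "\<dots> = of_real (\<Delta>^2)"
    unfolding r_def by simp
  finally show ?thesis .
qed

lemma norm_lam2_lam3_less_one: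
  assumes "0 \<le> \<Delta>" "\<Delta> < 1" "0 < Omega \<gamma> \<zeta> \<Delta> s" "Omega \<gamma> \<zeta> \<Delta> s < 1 + \<Delta>"
  shows "norm (lam2 \<gamma> \<zeta> \<Delta> s) < 1" and "norm (lam3 \<gamma> \<zeta> \<Delta> s) < 1"
proof -
  define w where "w = Omega \<gamma> \<zeta> \<Delta> s"
  have "w^2 < (1 + \<Delta>)^2"
    using assms unfolding w_def by (intro power_strict_mono) auto
  moreover have "0 < (1 - \<Delta>)^2 + w^2"
    using assms by (simp add: add_pos_nonneg)
  ultimately have "\<bar>w^2 - 2 * \<Delta>\<bar> < 1 + \<Delta>^2"
    by (simp add: abs_less_iff power2_eq_square algebra_simps)
  moreover have "\<Delta>^2 < 1"
    using assms by (simp add: abs_square_less_1)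
  ultimately show "norm (lam2 \<gamma> \<zeta> \<Delta> s) < 1" and "norm (lam3 \<gamma> \<zeta> \<Delta> s) < 1"
    unfolding lam2_lam3_eq_quadratic_roots w_def[symmetric]
    by (rule norm_quadratic_roots_less_one)+
qed

definition H2_term_sum :: "real \<Rightarrow> real \<Rightarrow> real \<Rightarrow> real \<Rightarrow> real" where
  "H2_term_sum \<gamma> \<zeta> \<Delta> s = s^2 * (1 + \<Delta>) / ((1 - \<Delta>) * ((1 + \<Delta>)^2 - (Omega \<gamma> \<zeta> \<Delta> s)^2))"

lemma H2_term_sums_double_root:
  assumes "0 \<le> \<Delta>" "\<Delta> < 1" "(Omega \<gamma> \<zeta> \<Delta> s)^2 = 4 * \<Delta>"
  shows "H2_term \<gamma> \<zeta> \<Delta> s sums of_real (H2_term_sum \<gamma> \<zeta> \<Delta> s)"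
proof -
  have "H2_term \<gamma> \<zeta> \<Delta> s = (\<lambda>t. of_real (s^2 * ((real t + 1)^2 * \<Delta>^t)))"
    unfolding H2_term_def using assms by (simp add: fun_eq_iff)
  moreover have "(1 + \<Delta>)^2 - (Omega \<gamma> \<zeta> \<Delta> s)^2 = (1 - \<Delta>)^2"
    using assms by (simp add: power2_eq_square algebra_simps)
  then have "H2_term_sum \<gamma> \<zeta> \<Delta> s = s^2 * ((1 + \<Delta>) / (1 - \<Delta>)^3)"
    unfolding H2_term_sum_def by (simp add: power2_eq_square power3_eq_cube)
  moreover have "(\<lambda>t. s^2 * ((real t + 1)^2 * \<Delta>^t)) sums (s^2 * ((1 + \<Delta>) / (1 - \<Delta>)^3))"
    using Suc_squared_times_power_sums[of \<Delta>] assms by (intro sums_mult) (simp add: add.commute)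
  ultimately show ?thesis
    by (simp only:) (rule sums_of_real)
qed

lemma H2_term_sum_partial_fractions:
  fixes \<gamma> \<zeta> \<Delta> s w :: real
  defines "w \<equiv> Omega \<gamma> \<zeta> \<Delta> s"
  assumes "\<Delta> < 1" "0 < w" "w < 1 + \<Delta>" "w^2 \<noteq> 4 * \<Delta>"
  shows "2 * s^2 / (w^2 - 4 * \<Delta>) * (- (\<Delta> / (1 - \<Delta>))
      + ((w^2 - 2 * \<Delta> - 2 * \<Delta>^2) / (1 - (w^2 - 2 * \<Delta>) + \<Delta>^2)) / 2)
    = H2_term_sum \<gamma> \<zeta> \<Delta> s"
proof -
  define E where "E = (1 + \<Delta>)^2 - w^2"
  define K where "K = w^2 - 4 * \<Delta>"
  have "E > 0"
    unfolding E_def using assms by (simp add: power_strict_mono)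
  have "K \<noteq> 0" "1 - \<Delta> \<noteq> 0"
    unfolding K_def using assms by auto
  have denominator: "1 - (w^2 - 2 * \<Delta>) + \<Delta>^2 = E"
    unfolding E_def by (simp add: power2_eq_square algebra_simps)
  have bracket: "- (\<Delta> / (1 - \<Delta>)) + (w^2 - 2 * \<Delta> - 2 * \<Delta>^2) / E / 2
      = (1 + \<Delta>) * K / (2 * (1 - \<Delta>) * E)"
    using \<open>E > 0\<close> assms(2) by (simp add: field_simps) (simp add: E_def K_def power2_eq_square algebra_simps)
  show ?thesis
    unfolding denominator bracket H2_term_sum_def w_def[symmetric] E_def[symmetric] K_def[symmetric]
    using \<open>E > 0\<close> \<open>K \<noteq> 0\<close> \<open>1 - \<Delta> \<noteq> 0\<close> by (simp add: field_simps)
qed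

lemma H2_term_sums_distinct_roots:
  fixes \<gamma> \<zeta> \<Delta> s w :: real
  defines "w \<equiv> Omega \<gamma> \<zeta> \<Delta> s"
  assumes "0 \<le> \<Delta>" "\<Delta> < 1" "0 < w" "w < 1 + \<Delta>" "w^2 \<noteq> 4 * \<Delta>"
  shows "H2_term \<gamma> \<zeta> \<Delta> s sums of_real (H2_term_sum \<gamma> \<zeta> \<Delta> s)"
proof -
  define c where "c = 2 * s^2 / (w^2 - 4 * \<Delta>)"
  define L2 L3 where "L2 = lam2 \<gamma> \<zeta> \<Delta> s" and "L3 = lam3 \<gamma> \<zeta> \<Delta> s"
  have "norm L2 < 1" "norm L3 < 1"
    unfolding L2_def L3_def using assms norm_lam2_lam3_less_one by auto
  have "(\<lambda>t. of_real \<Delta> ^ Suc t) sums (of_real \<Delta> / (1 - of_real \<Delta>) :: complex)"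
    using sums_mult[OF geometric_sums, of "of_real \<Delta>" "of_real \<Delta>"] assms by simp
  have "H2_term \<gamma> \<zeta> \<Delta> s =
      (\<lambda>t. of_real c * (- (of_real \<Delta> ^ Suc t) + (L2 ^ Suc t + L3 ^ Suc t) / 2))"
    unfolding H2_term_def w_def[symmetric] c_def L2_def L3_def using assms
    by (simp add: fun_eq_iff add_divide_distrib)
  also have "\<dots> sums (of_real c * (- (of_real \<Delta> / (1 - of_real \<Delta>))
      + ((L2 + L3 - 2 * (L2 * L3)) / (1 - (L2 + L3) + L2 * L3)) / 2))"
    by (intro sums_mult sums_add sums_minus sums_divide power_Suc_add_power_Suc_sums) fact+
  also have "of_real c * (- (of_real \<Delta> / (1 - of_real \<Delta>))
      + ((L2 + L3 - 2 * (L2 * L3)) / (1 - (L2 + L3) + L2 * L3)) / 2)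
    = of_real (c * (- (\<Delta> / (1 - \<Delta>))
      + ((w^2 - 2 * \<Delta> - 2 * \<Delta>^2) / (1 - (w^2 - 2 * \<Delta>) + \<Delta>^2)) / 2))"
    unfolding L2_def L3_def lam2_add_lam3 lam2_mult_lam3 w_def by simp
  also have "c * (- (\<Delta> / (1 - \<Delta>))
      + ((w^2 - 2 * \<Delta> - 2 * \<Delta>^2) / (1 - (w^2 - 2 * \<Delta>) + \<Delta>^2)) / 2)
    = H2_term_sum \<gamma> \<zeta> \<Delta> s"
    unfolding c_def w_def by (rule H2_term_sum_partial_fractions) (use assms in \<open>simp_all add: w_def\<close>)
  finally show ?thesis .
qed

lemma H2_term_sums:
  assumes "0 \<le> s" "0 < \<gamma>" "0 < \<zeta>" "0 \<le> \<Delta>" "\<Delta> < 1" "\<gamma> * \<zeta> * s < 1 + \<Delta>"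
  shows "H2_term \<gamma> \<zeta> \<Delta> s sums of_real (H2_term_sum \<gamma> \<zeta> \<Delta> s)"
proof -
  define w where "w = Omega \<gamma> \<zeta> \<Delta> s"
  have w: "w = 1 + \<Delta> - \<gamma> * \<zeta> * s"
    unfolding w_def Omega_def by simp
  show ?thesis
  proof (cases "s = 0")
    case True
    \<comment> \<open>Here lambda_2 = 1 lies on the unit circle, but the coefficient s^2 vanishes.\<close>
    then have "w^2 - 4 * \<Delta> = (1 - \<Delta>)^2"
      unfolding w by (simp add: power2_eq_square algebra_simps)
    with \<open>\<Delta> < 1\<close> have "H2_term \<gamma> \<zeta> \<Delta> s = (\<lambda>_. 0)"
      unfolding H2_term_def w_def[symmetric] using True by (auto simp: fun_eq_iff)
    then show ?thesis
      unfolding H2_term_sum_def using True by simp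
  next
    case False
    then have "0 < w" "w < 1 + \<Delta>"
      using assms unfolding w by auto
    then show ?thesis
      using assms H2_term_sums_double_root H2_term_sums_distinct_roots unfolding w_def by blast
  qed
qed

lemma gamma_sq_zeta_H2_term_sum_le:
  assumes "0 \<le> s" "0 < \<gamma>" "0 < \<zeta>" "\<Delta> < 1" "\<gamma> * \<zeta> * s < 1 + \<Delta>"
  shows "\<gamma>^2 * \<zeta> * H2_term_sum \<gamma> \<zeta> \<Delta> s \<le> \<gamma> * s / (1 - \<Delta>)"
proof (cases "s = 0")
  case False
  define w where "w = Omega \<gamma> \<zeta> \<Delta> s"
  define E where "E = (1 + \<Delta>)^2 - w^2"
  have w: "w = 1 + \<Delta> - \<gamma> * \<zeta> * s"
    unfolding w_def Omega_def by simp
  then have "0 < w"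
    using assms by simp
  have E: "E = \<gamma> * \<zeta> * s * (1 + \<Delta> + w)"
    unfolding E_def w by (simp add: power2_eq_square algebra_simps)
  have "0 \<le> \<gamma> * \<zeta> * s"
    using assms by simp
  then have "0 < 1 + \<Delta> + w"
    using assms(5) \<open>0 < w\<close> by linarith
  then have "0 < E"
    unfolding E using False assms by simp
  have "\<gamma> * s * E = \<gamma>^2 * \<zeta> * (s^2 * (1 + \<Delta>)) + \<gamma>^2 * \<zeta> * s^2 * w"
    unfolding E by (simp add: power2_eq_square algebra_simps)
  moreover have "0 \<le> \<gamma>^2 * \<zeta> * s^2 * w"
    using assms \<open>0 < w\<close> by simp
  ultimately have numerator: "\<gamma>^2 * \<zeta> * (s^2 * (1 + \<Delta>)) \<le> \<gamma> * s * E"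
    by linarith
  have "\<gamma>^2 * \<zeta> * H2_term_sum \<gamma> \<zeta> \<Delta> s = \<gamma>^2 * \<zeta> * (s^2 * (1 + \<Delta>)) / ((1 - \<Delta>) * E)"
    unfolding H2_term_sum_def E_def w_def by simp
  also have "\<dots> \<le> \<gamma> * s * E / ((1 - \<Delta>) * E)"
    using numerator \<open>0 < E\<close> assms by (intro divide_right_mono) auto
  also have "\<dots> = \<gamma> * s / (1 - \<Delta>)"
    using \<open>0 < E\<close> by simp
  finally show ?thesis .
qed (simp add: H2_term_sum_def)

lemma kernel_sums:
  assumes "\<And>j. j < n \<Longrightarrow> 0 \<le> s j" "\<And>j. j < n \<Longrightarrow> \<gamma> * \<zeta> * s j < 1 + \<Delta>"
    and "0 < \<gamma>" "0 < \<zeta>" "0 \<le> \<Delta>" "\<Delta> < 1"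
  shows "kernel n s \<gamma> \<zeta> \<Delta> sums
    of_real (\<gamma>^2 * \<zeta> * (1 - \<zeta>) * (1 / real n * (\<Sum>j<n. H2_term_sum \<gamma> \<zeta> \<Delta> (s j))))"
proof -
  have "(\<lambda>t. of_real (\<gamma>^2 * \<zeta> * (1 - \<zeta>)) * (1 / of_nat n * (\<Sum>j<n. H2_term \<gamma> \<zeta> \<Delta> (s j) t)))
    sums (of_real (\<gamma>^2 * \<zeta> * (1 - \<zeta>)) * (1 / of_nat n * (\<Sum>j<n. of_real (H2_term_sum \<gamma> \<zeta> \<Delta> (s j)))))"
    using assms by (intro sums_mult sums_sum H2_term_sums) auto
  then show ?thesis
    by (simp add: Defs.kernel_def[abs_def] H2_def)
qed

theorem proposition2:
  fixes A :: "real mat" and n d :: nat and s :: "nat \<Rightarrow> real"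
    and \<gamma> \<Delta> \<zeta> :: real
  assumes "n \<ge> 1"
    and "A \<in> carrier_mat n d"
    and "char_poly (A * A\<^sup>T) = (\<Prod>j<n. [:- s j, 1:])"
    and "\<And>i j. i \<le> j \<Longrightarrow> j < n \<Longrightarrow> s j \<le> s i"
    and "\<And>j. j < n \<Longrightarrow> s j \<ge> 0"
    and "\<gamma> > 0" and "0 \<le> \<Delta>" and "\<Delta> < 1" and "0 < \<zeta>" and "\<zeta> \<le> 1"
    and "\<gamma> * (\<zeta> * Max (s ` {..<n})) < 1 + \<Delta>"
    and "(1 - \<zeta>) * \<gamma> / (1 - \<Delta>) * (1 / real n) * mat_trace (A * A\<^sup>T) < 1"
  shows "\<exists>S::real. kernel n s \<gamma> \<zeta> \<Delta> sums complex_of_real S \<and> S < 1"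
proof -
  have "char_poly (A * A\<^sup>T) = (\<Prod>a\<leftarrow>map s [0..<n]. [:- a, 1:])"
    using assms(3) by (simp add: prod.distinct_set_conv_list[symmetric] lessThan_atLeast0 o_def)
  then have "mat_trace (A * A\<^sup>T) = sum_list (map s [0..<n])"
    using assms(2) by (intro mat_trace_eq_sum_eigenvalues[of _ n]) auto
  then have trace: "mat_trace (A * A\<^sup>T) = (\<Sum>j<n. s j)"
    by (simp add: sum.distinct_set_conv_list[symmetric] lessThan_atLeast0)
  have step: "\<gamma> * \<zeta> * s j < 1 + \<Delta>" if "j < n" for j
  proof -
    have "\<gamma> * (\<zeta> * s j) \<le> \<gamma> * (\<zeta> * Max (s ` {..<n}))"
      using that assms(6,9) by (intro mult_left_mono) auto
    then show ?thesis
      using assms(11) by (simp add: mult.assoc)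
  qed
  have "\<gamma>^2 * \<zeta> * (1 - \<zeta>) * (1 / real n * (\<Sum>j<n. H2_term_sum \<gamma> \<zeta> \<Delta> (s j)))
      = 1 / real n * (\<Sum>j<n. (1 - \<zeta>) * (\<gamma>^2 * \<zeta> * H2_term_sum \<gamma> \<zeta> \<Delta> (s j)))"
    by (simp add: sum_distrib_left mult_ac)
  also have "\<dots> \<le> 1 / real n * (\<Sum>j<n. (1 - \<zeta>) * (\<gamma> * s j / (1 - \<Delta>)))"
    using assms step by (intro mult_left_mono sum_mono gamma_sq_zeta_H2_term_sum_le) auto
  also have "\<dots> = (1 - \<zeta>) * \<gamma> / (1 - \<Delta>) * (1 / real n) * mat_trace (A * A\<^sup>T)"
    unfolding trace by (simp add: sum_distrib_left sum_divide_distrib mult_ac)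
  also have "\<dots> < 1"
    by (fact assms(12))
  finally show ?thesis
    using kernel_sums[of n s, OF assms(5) step assms(6,9,7,8)] by blast
qed

end
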